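(* Let $A\bowtie^{\theta} I$ be an amalgamated Banach algebra as in the context, and assume $\sigma(A)\neq\emptyset$ and that the linear span of $\theta(A)I\cup I\theta(A)$ is dense in $I$. Identify characters of $A\bowtie^\theta I$ with pairs $(\phi,\psi)\in A^*\times I^*$ via $(a,i)\mapsto\phi(a)+\psi(i)$. Then $\sigma(A\bowtie^{\theta} I)=E\cup F$, where $$E=\{(\phi_{\psi,i},\psi): \psi\in\sigma(I),\ i\in I,\ \psi(i)=1\},\qquad \phi_{\psi,i}(a)=\psi(\theta(a)i)\ (a\in A),$$ $$F=\{(\phi,0):\phi\in\sigma(A)\}.$$ Moreover, with respect to the weak$^*$ topology, $E$ is open and $F$ is closed in $\sigma(A\bowtie^\theta I)$.
   Context: Let $A$ and $B$ be Banach algebras, $\theta:A\to B$ a continuous algebra homomorphism with $\|\theta\|\le 1$, and $I$ a closed two-sided ideal of $B$. The amalgamated Banach algebra $A\bowtie^{\theta} I$ is the Banach space $\{(a,i): a\in A,\ i\in I\}$ with norm $\|(a,i)\|=\|a\|+\|i\|$ and product $(a,i)\cdot(a',i')=(aa',\ \theta(a)i'+i\theta(a')+ii')$. For a Banach algebra $C$, $\sigma(C)$ denotes the set of nonzero multiplicative linear functionals (characters) on $C$, with the relative weak$^*$ topology. $\theta(A)I$ denotes $\{\theta(a)i: a\in A, i\in I\}$ and similarly for $I\theta(A)$. *)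

theory Defs
  imports "HOL-Analysis.Analysis"
begin

class cvector = real_vector +
  fixes scaleC :: "complex \<Rightarrow> 'a \<Rightarrow> 'a"
  assumes scaleC_add_right: "scaleC c (x + y) = scaleC c x + scaleC c y"
    and scaleC_add_left: "scaleC (c + d) x = scaleC c x + scaleC d x"
    and scaleC_scaleC: "scaleC c (scaleC d x) = scaleC (c * d) x"
    and scaleC_one: "scaleC 1 x = x"
    and scaleR_scaleC: "scaleR r x = scaleC (of_real r) x"

class cnormed_algebra = cvector + real_normed_algebra +
  assumes norm_scaleC: "norm (scaleC c x) = cmod c * norm x"
    and scaleC_mult_left: "scaleC c (x * y) = scaleC c x * y"
    and scaleC_mult_right: "scaleC c (x * y) = x * scaleC c y"

class cbanach_algebra = cnormed_algebra + banach

definition cspan :: "'a::cvector set \<Rightarrow> 'a set" where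
  "cspan S = {y. \<exists>T c. finite T \<and> T \<subseteq> S \<and> y = (\<Sum>x\<in>T. scaleC (c x) x)}"

text \<open>A character of an algebra with carrier C (and operations add, mul, smul) is a
nonzero complex-linear multiplicative functional on C. To make it a unique object
we normalize it to be 0 outside C.\<close>

definition is_character ::
  "'x set \<Rightarrow> ('x \<Rightarrow> 'x \<Rightarrow> 'x) \<Rightarrow> ('x \<Rightarrow> 'x \<Rightarrow> 'x) \<Rightarrow> (complex \<Rightarrow> 'x \<Rightarrow> 'x)
     \<Rightarrow> ('x \<Rightarrow> complex) \<Rightarrow> bool" where
  "is_character C addo mulo smulo f \<longleftrightarrow>
     (\<forall>x\<in>C. \<forall>y\<in>C. f (addo x y) = f x + f y \<and> f (mulo x y) = f x * f y) \<and>
     (\<forall>c. \<forall>x\<in>C. f (smulo c x) = c * f x) \<and>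
     (\<exists>x\<in>C. f x \<noteq> 0) \<and>
     (\<forall>x. x \<notin> C \<longrightarrow> f x = 0)"

definition characters ::
  "'x set \<Rightarrow> ('x \<Rightarrow> 'x \<Rightarrow> 'x) \<Rightarrow> ('x \<Rightarrow> 'x \<Rightarrow> 'x) \<Rightarrow> (complex \<Rightarrow> 'x \<Rightarrow> 'x)
     \<Rightarrow> ('x \<Rightarrow> complex) set" where
  "characters C addo mulo smulo = {f. is_character C addo mulo smulo f}"

text \<open>sigma(A) for a complex Banach algebra A (the whole type), and sigma(I) for a
closed ideal I (a subset of B, with the inherited operations).\<close>

definition char_space :: "'a::cbanach_algebra set \<Rightarrow> ('a \<Rightarrow> complex) set" where
  "char_space C = characters C (+) (*) scaleC"

definition amal_carrier :: "'b::cbanach_algebra set \<Rightarrow> ('a::cbanach_algebra \<times> 'b) set" where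
  "amal_carrier I = UNIV \<times> I"

definition amal_mult ::
  "('a::cbanach_algebra \<Rightarrow> 'b::cbanach_algebra) \<Rightarrow> 'a \<times> 'b \<Rightarrow> 'a \<times> 'b \<Rightarrow> 'a \<times> 'b" where
  "amal_mult \<theta> x y = (fst x * fst y,
      \<theta> (fst x) * snd y + snd x * \<theta> (fst y) + snd x * snd y)"

definition amal_add :: "'a::cbanach_algebra \<times> 'b::cbanach_algebra \<Rightarrow> 'a \<times> 'b \<Rightarrow> 'a \<times> 'b" where
  "amal_add x y = (fst x + fst y, snd x + snd y)"

definition amal_smul :: "complex \<Rightarrow> 'a::cbanach_algebra \<times> 'b::cbanach_algebra \<Rightarrow> 'a \<times> 'b" where
  "amal_smul c x = (scaleC c (fst x), scaleC c (snd x))"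

text \<open>sigma(A amalgamated-by-theta I); its weak* topology is the topology of pointwise
convergence on the carrier, i.e. the subspace topology inherited from the product
topology on functions (characters vanish off the carrier).\<close>

definition amal_char_space ::
  "('a::cbanach_algebra \<Rightarrow> 'b::cbanach_algebra) \<Rightarrow> 'b set \<Rightarrow> ('a \<times> 'b \<Rightarrow> complex) set" where
  "amal_char_space \<theta> I = characters (amal_carrier I) amal_add (amal_mult \<theta>) amal_smul"

definition pair_fun ::
  "'b set \<Rightarrow> ('a \<Rightarrow> complex) \<Rightarrow> ('b \<Rightarrow> complex) \<Rightarrow> ('a \<times> 'b \<Rightarrow> complex)" where
  "pair_fun I \<phi> \<psi> = (\<lambda>(a, j). if j \<in> I then \<phi> a + \<psi> j else 0)"

definition closed_ideal :: "'b::cbanach_algebra set \<Rightarrow> bool" where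
  "closed_ideal I \<longleftrightarrow> closed I \<and> 0 \<in> I \<and>
     (\<forall>x\<in>I. \<forall>y\<in>I. x + y \<in> I) \<and> (\<forall>c. \<forall>x\<in>I. scaleC c x \<in> I) \<and>
     (\<forall>b. \<forall>x\<in>I. b * x \<in> I \<and> x * b \<in> I)"

definition contractive_hom :: "('a::cbanach_algebra \<Rightarrow> 'b::cbanach_algebra) \<Rightarrow> bool" where
  "contractive_hom \<theta> \<longleftrightarrow>
     (\<forall>x y. \<theta> (x + y) = \<theta> x + \<theta> y) \<and> (\<forall>c x. \<theta> (scaleC c x) = scaleC c (\<theta> x)) \<and>
     (\<forall>x y. \<theta> (x * y) = \<theta> x * \<theta> y) \<and> (\<forall>x. norm (\<theta> x) \<le> norm x)"

end

theory Submission
  imports Defs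
begin

text \<open>A character f of the amalgamation splits as f (a, j) = f (a, 0) + f (0, j). If f vanishes
on 0 \<times> I, then f (a, 0) is a character of A, giving F. Otherwise f (0, -) is a character
\<psi> of I; choosing i \<in> I with \<psi> i = 1, multiplicativity on (a, 0) \<cdot> (0, i) = (0, \<theta> a i)
forces f (a, 0) = \<psi> (\<theta> a i), giving E. Conversely, such a pair defines a character,
because \<psi> (\<theta> a k) = \<psi> (\<theta> a i) \<psi> k and \<psi> (k \<theta> a) = \<psi> k \<psi> (\<theta> a i) for k \<in> I.
Finally, the condition "f vanishes on 0 \<times> I" is weak* closed and holds on F but
fails on E (as f (0, i) = 1), so F is closed and its complement E is open.\<close>

lemma scaleC_zero_right [simp]: "scaleC c (0::'a::cvector) = 0"
  by (metis add_cancel_right_right scaleC_add_right)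

lemma closed_vanishing_on:
  "closed {g :: 'a \<Rightarrow> 'b::{t2_space,zero}. \<forall>x\<in>X. g x = 0}"
proof -
  have "{g :: 'a \<Rightarrow> 'b. \<forall>x\<in>X. g x = 0} = (\<Inter>x\<in>X. {g. g x = 0})" by blast
  then show ?thesis
    by (simp add: closed_INT closed_Collect_eq continuous_on_const)
qed

definition multiplicative_functional :: "'a::cnormed_algebra set \<Rightarrow> ('a \<Rightarrow> complex) \<Rightarrow> bool" where
  "multiplicative_functional C f \<longleftrightarrow>
     (\<forall>x\<in>C. \<forall>y\<in>C. f (x + y) = f x + f y \<and> f (x * y) = f x * f y) \<and>
     (\<forall>c. \<forall>x\<in>C. f (scaleC c x) = c * f x)"

lemma char_space_iff:
  "f \<in> char_space C \<longleftrightarrow>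
     multiplicative_functional C f \<and> (\<exists>x\<in>C. f x \<noteq> 0) \<and> (\<forall>x. x \<notin> C \<longrightarrow> f x = 0)"
  by (auto simp: char_space_def characters_def is_character_def multiplicative_functional_def)

lemma multiplicative_functional_zero:
  assumes "multiplicative_functional C f" and "0 \<in> C"
  shows "f 0 = 0"
proof -
  have "f (0 + 0) = f 0 + f 0" using assms unfolding multiplicative_functional_def by blast
  then show ?thesis by simp
qed

lemma amal_carrier_iff [simp]: "(a, j) \<in> amal_carrier I \<longleftrightarrow> j \<in> I"
  by (simp add: amal_carrier_def)

lemma pair_fun_cong:
  "(\<And>j. j \<in> I \<Longrightarrow> \<psi> j = \<psi>' j) \<Longrightarrow> pair_fun I \<phi> \<psi> = pair_fun I \<phi> \<psi>'"
  by (auto simp: pair_fun_def fun_eq_iff)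

text \<open>Only the algebraic structure matters: the theorem holds without the closedness of I,
the contractivity of \<theta>, \<sigma>(A) \<noteq> {} and the density hypothesis.\<close>

locale amalgamation =
  fixes \<theta> :: "'a::cbanach_algebra \<Rightarrow> 'b::cbanach_algebra" and I :: "'b set"
  assumes hom_add: "\<theta> (x + y) = \<theta> x + \<theta> y"
    and hom_scaleC: "\<theta> (scaleC c x) = scaleC c (\<theta> x)"
    and hom_mult: "\<theta> (x * y) = \<theta> x * \<theta> y"
    and ideal_zero: "0 \<in> I"
    and ideal_add: "j \<in> I \<Longrightarrow> k \<in> I \<Longrightarrow> j + k \<in> I"
    and ideal_scaleC: "j \<in> I \<Longrightarrow> scaleC c j \<in> I"
    and ideal_mult_left: "j \<in> I \<Longrightarrow> b * j \<in> I"
    and ideal_mult_right: "j \<in> I \<Longrightarrow> j * b \<in> I"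

lemma amalgamationI: "contractive_hom \<theta> \<Longrightarrow> closed_ideal I \<Longrightarrow> amalgamation \<theta> I"
  by unfold_locales (auto simp: contractive_hom_def closed_ideal_def)

context amalgamation
begin

definition ideal_chars :: "('a \<times> 'b \<Rightarrow> complex) set" where
  "ideal_chars = {pair_fun I (\<lambda>a. \<psi> (\<theta> a * i)) \<psi> | \<psi> i.
                    \<psi> \<in> char_space I \<and> i \<in> I \<and> \<psi> i = 1}"

definition algebra_chars :: "('a \<times> 'b \<Rightarrow> complex) set" where
  "algebra_chars = {pair_fun I \<phi> (\<lambda>_. 0) | \<phi>. \<phi> \<in> char_space (UNIV :: 'a set)}"

lemma hom_zero [simp]: "\<theta> 0 = 0"
  using hom_add[of 0 0] by simp

lemma pair_fun_mem_amal_char_space: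
  assumes \<phi>: "multiplicative_functional UNIV \<phi>" and \<psi>: "multiplicative_functional I \<psi>"
    and left: "\<And>a k. k \<in> I \<Longrightarrow> \<psi> (\<theta> a * k) = \<phi> a * \<psi> k"
    and right: "\<And>a k. k \<in> I \<Longrightarrow> \<psi> (k * \<theta> a) = \<psi> k * \<phi> a"
    and nonzero: "j\<^sub>0 \<in> I" "\<phi> a\<^sub>0 + \<psi> j\<^sub>0 \<noteq> 0"
  shows "pair_fun I \<phi> \<psi> \<in> amal_char_space \<theta> I"
  unfolding amal_char_space_def characters_def mem_Collect_eq is_character_def
proof (intro conjI ballI allI impI)
  fix x y :: "'a \<times> 'b" assume "x \<in> amal_carrier I" "y \<in> amal_carrier I"
  then obtain a j b k where x: "x = (a, j)" and y: "y = (b, k)" and jk: "j \<in> I" "k \<in> I"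
    by (cases x, cases y) simp
  have in_I: "\<theta> a * k \<in> I" "j * \<theta> b \<in> I" "j * k \<in> I" "\<theta> a * k + j * \<theta> b \<in> I"
    using jk by (simp_all add: ideal_mult_left ideal_mult_right ideal_add)
  have "\<psi> (\<theta> a * k + j * \<theta> b + j * k) = \<phi> a * \<psi> k + \<psi> j * \<phi> b + \<psi> j * \<psi> k"
    using \<psi> in_I jk by (simp add: multiplicative_functional_def left right)
  then show "pair_fun I \<phi> \<psi> (amal_mult \<theta> x y) = pair_fun I \<phi> \<psi> x * pair_fun I \<phi> \<psi> y"
    using \<phi> in_I jk
    by (simp add: x y amal_mult_def pair_fun_def ideal_add multiplicative_functional_def
        ring_distribs)
  show "pair_fun I \<phi> \<psi> (amal_add x y) = pair_fun I \<phi> \<psi> x + pair_fun I \<phi> \<psi> y"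
    using \<phi> \<psi> jk by (simp add: x y amal_add_def pair_fun_def ideal_add multiplicative_functional_def)
next
  fix c and x :: "'a \<times> 'b" assume "x \<in> amal_carrier I"
  then obtain a j where x: "x = (a, j)" and j: "j \<in> I" by (cases x) simp
  show "pair_fun I \<phi> \<psi> (amal_smul c x) = c * pair_fun I \<phi> \<psi> x"
    using \<phi> \<psi> j
    by (simp add: x amal_smul_def pair_fun_def ideal_scaleC multiplicative_functional_def
        ring_distribs)
next
  show "\<exists>x\<in>amal_carrier I. pair_fun I \<phi> \<psi> x \<noteq> 0"
    using nonzero by (intro bexI[of _ "(a\<^sub>0, j\<^sub>0)"]) (simp_all add: pair_fun_def)
next
  fix x :: "'a \<times> 'b" assume "x \<notin> amal_carrier I"
  then show "pair_fun I \<phi> \<psi> x = 0" by (cases x) (simp add: pair_fun_def)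
qed

lemma algebra_chars_subset: "algebra_chars \<subseteq> amal_char_space \<theta> I"
proof
  fix f assume "f \<in> algebra_chars"
  then obtain \<phi> where f: "f = pair_fun I \<phi> (\<lambda>_. 0)" and "\<phi> \<in> char_space UNIV"
    by (auto simp: algebra_chars_def)
  then obtain a where "multiplicative_functional UNIV \<phi>" "\<phi> a \<noteq> 0"
    by (auto simp: char_space_iff)
  then show "f \<in> amal_char_space \<theta> I"
    unfolding f using ideal_zero
    by (intro pair_fun_mem_amal_char_space) (auto simp: multiplicative_functional_def)
qed

text \<open>The trick in the next two lemmas is to insert the factor \<psi> i = 1.\<close>

lemma ideal_character_left:
  assumes \<psi>: "multiplicative_functional I \<psi>" and i: "i \<in> I" "\<psi> i = 1" and k: "k \<in> I"
  shows "\<psi> (\<theta> a * k) = \<psi> (\<theta> a * i) * \<psi> k"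
proof -
  have mult: "\<And>x y. x \<in> I \<Longrightarrow> y \<in> I \<Longrightarrow> \<psi> (x * y) = \<psi> x * \<psi> y"
    using \<psi> by (simp add: multiplicative_functional_def)
  have through_i: "\<psi> (\<theta> a * k) = \<psi> (i * \<theta> a) * \<psi> k" if k: "k \<in> I" for k
  proof -
    have "\<psi> (\<theta> a * k) = \<psi> i * \<psi> (\<theta> a * k)" using i(2) by simp
    also have "\<dots> = \<psi> (i * \<theta> a * k)"
      using mult[OF i(1) ideal_mult_left[OF k]] by (simp add: mult.assoc)
    also have "\<dots> = \<psi> (i * \<theta> a) * \<psi> k"
      using mult[OF ideal_mult_right[OF i(1)] k] .
    finally show ?thesis .
  qed
  have "\<psi> (\<theta> a * i) = \<psi> (i * \<theta> a)" using through_i[OF i(1)] i(2) by simp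
  with through_i[OF k] show ?thesis by simp
qed

lemma ideal_character_right:
  assumes \<psi>: "multiplicative_functional I \<psi>" and i: "i \<in> I" "\<psi> i = 1" and k: "k \<in> I"
  shows "\<psi> (k * \<theta> a) = \<psi> k * \<psi> (\<theta> a * i)"
proof -
  have mult: "\<And>x y. x \<in> I \<Longrightarrow> y \<in> I \<Longrightarrow> \<psi> (x * y) = \<psi> x * \<psi> y"
    using \<psi> by (simp add: multiplicative_functional_def)
  have "\<psi> (k * \<theta> a) = \<psi> (k * \<theta> a) * \<psi> i" using i(2) by simp
  also have "\<dots> = \<psi> (k * \<theta> a * i)" using mult[OF ideal_mult_right[OF k] i(1)] by simp
  also have "\<dots> = \<psi> k * \<psi> (\<theta> a * i)"
    using mult[OF k ideal_mult_left[OF i(1)]] by (simp add: mult.assoc)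
  finally show ?thesis .
qed

lemma ideal_character_induced:
  assumes \<psi>: "multiplicative_functional I \<psi>" and i: "i \<in> I" "\<psi> i = 1"
  shows "multiplicative_functional UNIV (\<lambda>a. \<psi> (\<theta> a * i))"
proof -
  have "\<psi> (\<theta> (a * b) * i) = \<psi> (\<theta> a * i) * \<psi> (\<theta> b * i)" for a b
    using ideal_character_left[OF \<psi> i ideal_mult_left[OF i(1)], of a "\<theta> b"]
    by (simp add: hom_mult mult.assoc)
  moreover have "\<psi> (\<theta> (a + b) * i) = \<psi> (\<theta> a * i) + \<psi> (\<theta> b * i)" for a b
    using \<psi> i(1) by (simp add: multiplicative_functional_def hom_add distrib_right ideal_mult_left)
  moreover have "\<psi> (\<theta> (scaleC c a) * i) = c * \<psi> (\<theta> a * i)" for c a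
    using \<psi> i(1)
    by (simp add: multiplicative_functional_def hom_scaleC ideal_mult_left
        flip: scaleC_mult_left)
  ultimately show ?thesis by (simp add: multiplicative_functional_def)
qed

lemma ideal_chars_subset: "ideal_chars \<subseteq> amal_char_space \<theta> I"
proof
  fix f assume "f \<in> ideal_chars"
  then obtain \<psi> i where f: "f = pair_fun I (\<lambda>a. \<psi> (\<theta> a * i)) \<psi>"
    and \<psi>: "multiplicative_functional I \<psi>" and i: "i \<in> I" "\<psi> i = 1"
    by (auto simp: ideal_chars_def char_space_iff)
  have "\<psi> (\<theta> 0 * i) + \<psi> i \<noteq> 0"
    using i multiplicative_functional_zero[OF \<psi> ideal_zero] by simp
  then show "f \<in> amal_char_space \<theta> I"
    unfolding f using i
    by (intro pair_fun_mem_amal_char_space ideal_character_induced[OF \<psi> i] \<psi>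
        ideal_character_left[OF \<psi> i] ideal_character_right[OF \<psi> i])
qed

lemma amal_character_restrictions:
  assumes "f \<in> amal_char_space \<theta> I"
  shows "multiplicative_functional UNIV (\<lambda>a. f (a, 0))"
    and "multiplicative_functional I (\<lambda>j. f (0, j))"
    and "j \<in> I \<Longrightarrow> f (0, \<theta> a * j) = f (a, 0) * f (0, j)"
    and "f = pair_fun I (\<lambda>a. f (a, 0)) (\<lambda>j. f (0, j))"
proof -
  have add: "\<And>x y. x \<in> amal_carrier I \<Longrightarrow> y \<in> amal_carrier I \<Longrightarrow> f (amal_add x y) = f x + f y"
    and mult: "\<And>x y. x \<in> amal_carrier I \<Longrightarrow> y \<in> amal_carrier I \<Longrightarrow>
                 f (amal_mult \<theta> x y) = f x * f y"
    and smul: "\<And>c x. x \<in> amal_carrier I \<Longrightarrow> f (amal_smul c x) = c * f x"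
    and off: "\<And>x. x \<notin> amal_carrier I \<Longrightarrow> f x = 0"
    using assms unfolding amal_char_space_def characters_def is_character_def by blast+
  show "multiplicative_functional UNIV (\<lambda>a. f (a, 0))"
    using add[of "(_, 0)" "(_, 0)"] mult[of "(_, 0)" "(_, 0)"] smul[of "(_, 0)"] ideal_zero
    by (simp add: multiplicative_functional_def amal_add_def amal_mult_def amal_smul_def)
  show "multiplicative_functional I (\<lambda>j. f (0, j))"
    using add[of "(0, _)" "(0, _)"] mult[of "(0, _)" "(0, _)"] smul[of "(0, _)"]
    by (simp add: multiplicative_functional_def amal_add_def amal_mult_def amal_smul_def)
  show "f (0, \<theta> a * j) = f (a, 0) * f (0, j)" if "j \<in> I"
    using mult[of "(a, 0)" "(0, j)"] that ideal_zero by (simp add: amal_mult_def)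
  show "f = pair_fun I (\<lambda>a. f (a, 0)) (\<lambda>j. f (0, j))"
  proof
    fix x :: "'a \<times> 'b"
    show "f x = pair_fun I (\<lambda>a. f (a, 0)) (\<lambda>j. f (0, j)) x"
    proof (cases x)
      case (Pair a j)
      then show ?thesis
        using add[of "(a, 0)" "(0, j)"] off[of x] ideal_zero
        by (cases "j \<in> I") (simp_all add: amal_add_def pair_fun_def)
    qed
  qed
qed

lemma amal_char_space_subset: "amal_char_space \<theta> I \<subseteq> ideal_chars \<union> algebra_chars"
proof
  fix f assume f: "f \<in> amal_char_space \<theta> I"
  define \<phi> where "\<phi> a = f (a, 0)" for a
  note restr = amal_character_restrictions[OF f, folded \<phi>_def]
  show "f \<in> ideal_chars \<union> algebra_chars"
  proof (cases "\<exists>k\<in>I. f (0, k) \<noteq> 0")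
    case True
    then obtain k where k: "k \<in> I" "f (0, k) \<noteq> 0" by blast
    define \<psi> where "\<psi> j = (if j \<in> I then f (0, j) else 0)" for j
    define i where "i = scaleC (1 / f (0, k)) k"
    have \<psi>: "multiplicative_functional I \<psi>"
      using restr(2) by (simp add: \<psi>_def multiplicative_functional_def ideal_add
          ideal_mult_left ideal_scaleC)
    have i: "i \<in> I" "\<psi> i = 1"
      using k multiplicative_functional_def[THEN iffD1, OF restr(2)]
      by (simp_all add: i_def \<psi>_def ideal_scaleC)
    have "\<psi> \<in> char_space I"
      using \<psi> i unfolding char_space_iff by (force simp: \<psi>_def)
    moreover have "\<phi> = (\<lambda>a. \<psi> (\<theta> a * i))"
      using restr(3)[OF i(1)] i by (simp add: fun_eq_iff \<psi>_def ideal_mult_left)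
    moreover have "f = pair_fun I \<phi> \<psi>"
      using restr(4) by (simp add: \<psi>_def cong: pair_fun_cong)
    ultimately show ?thesis
      using i unfolding ideal_chars_def by blast
  next
    case False
    then have f_eq: "f = pair_fun I \<phi> (\<lambda>_. 0)"
      using restr(4) by (simp cong: pair_fun_cong)
    obtain x where "x \<in> amal_carrier I" "f x \<noteq> 0"
      using f by (auto simp: amal_char_space_def characters_def is_character_def)
    then obtain a where "\<phi> a \<noteq> 0"
      by (cases x) (auto simp: f_eq pair_fun_def)
    then have "\<phi> \<in> char_space UNIV"
      using restr(1) by (auto simp: char_space_iff)
    then show ?thesis using f_eq unfolding algebra_chars_def by blast
  qed
qed

lemma amal_char_space_eq: "amal_char_space \<theta> I = ideal_chars \<union> algebra_chars"
  using amal_char_space_subset ideal_chars_subset algebra_chars_subset by blast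

lemma algebra_chars_vanish_on_ideal:
  assumes "g \<in> algebra_chars" and "x \<in> {0} \<times> I"
  shows "g x = 0"
proof -
  obtain \<phi> where g: "g = pair_fun I \<phi> (\<lambda>_. 0)" and "\<phi> \<in> char_space UNIV"
    using assms(1) by (auto simp: algebra_chars_def)
  then have "\<phi> 0 = 0"
    using multiplicative_functional_zero[of UNIV \<phi>] by (simp add: char_space_iff)
  then show ?thesis using assms(2) by (auto simp: g pair_fun_def)
qed

lemma ideal_chars_not_vanish_on_ideal:
  assumes "g \<in> ideal_chars"
  shows "\<exists>x\<in>{0} \<times> I. g x \<noteq> 0"
proof -
  obtain \<psi> i where g: "g = pair_fun I (\<lambda>a. \<psi> (\<theta> a * i)) \<psi>"
    and \<psi>: "multiplicative_functional I \<psi>" and i: "i \<in> I" "\<psi> i = 1"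
    using assms by (auto simp: ideal_chars_def char_space_iff)
  have "g (0, i) = 1"
    using i multiplicative_functional_zero[OF \<psi> ideal_zero] by (simp add: g pair_fun_def)
  then show ?thesis using i(1) by (intro bexI[of _ "(0, i)"]) simp_all
qed

lemma algebra_chars_eq_vanishing:
  "algebra_chars = amal_char_space \<theta> I \<inter> {g. \<forall>x\<in>{0} \<times> I. g x = 0}"
proof (intro equalityI subsetI)
  fix g assume "g \<in> algebra_chars"
  then show "g \<in> amal_char_space \<theta> I \<inter> {g. \<forall>x\<in>{0} \<times> I. g x = 0}"
    using algebra_chars_subset algebra_chars_vanish_on_ideal by blast
next
  fix g assume g: "g \<in> amal_char_space \<theta> I \<inter> {g. \<forall>x\<in>{0} \<times> I. g x = 0}"
  then have "g \<notin> ideal_chars" using ideal_chars_not_vanish_on_ideal by blast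
  with g show "g \<in> algebra_chars" unfolding amal_char_space_eq by blast
qed

lemma ideal_chars_eq_nonvanishing:
  "ideal_chars = amal_char_space \<theta> I - {g. \<forall>x\<in>{0} \<times> I. g x = 0}"
proof (intro equalityI subsetI)
  fix g assume "g \<in> ideal_chars"
  then show "g \<in> amal_char_space \<theta> I - {g. \<forall>x\<in>{0} \<times> I. g x = 0}"
    using ideal_chars_subset ideal_chars_not_vanish_on_ideal by blast
next
  fix g assume g: "g \<in> amal_char_space \<theta> I - {g. \<forall>x\<in>{0} \<times> I. g x = 0}"
  then have "g \<notin> algebra_chars" using algebra_chars_vanish_on_ideal by blast
  with g show "g \<in> ideal_chars" unfolding amal_char_space_eq by blast
qed

lemma closedin_algebra_chars: "closedin (top_of_set (amal_char_space \<theta> I)) algebra_chars"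
  unfolding algebra_chars_eq_vanishing by (rule closedin_closed_Int[OF closed_vanishing_on])

lemma openin_ideal_chars: "openin (top_of_set (amal_char_space \<theta> I)) ideal_chars"
  unfolding ideal_chars_eq_nonvanishing Diff_eq
  by (rule openin_open_Int[OF open_Compl[OF closed_vanishing_on]])

end

theorem theorem5p1:
  fixes \<theta> :: "'a::cbanach_algebra \<Rightarrow> 'b::cbanach_algebra"
    and I :: "'b set"
  assumes hom: "contractive_hom \<theta>"
    and ideal: "closed_ideal I"
    and sigmaA: "char_space (UNIV :: 'a set) \<noteq> {}"
    and dense: "I \<subseteq> closure (cspan ({\<theta> a * i | a i. i \<in> I} \<union> {i * \<theta> a | a i. i \<in> I}))"
  defines "E \<equiv> {pair_fun I (\<lambda>a. \<psi> (\<theta> a * i)) \<psi> | \<psi> i.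
                   \<psi> \<in> char_space I \<and> i \<in> I \<and> \<psi> i = 1}"
    and "F \<equiv> {pair_fun I \<phi> (\<lambda>_. 0) | \<phi>. \<phi> \<in> char_space (UNIV :: 'a set)}"
  shows "amal_char_space \<theta> I = E \<union> F
         \<and> openin (top_of_set (amal_char_space \<theta> I)) E
         \<and> closedin (top_of_set (amal_char_space \<theta> I)) F"
proof -
  interpret amalgamation \<theta> I using hom ideal by (rule amalgamationI)
  have E: "E = ideal_chars" unfolding E_def ideal_chars_def ..
  have F: "F = algebra_chars" unfolding F_def algebra_chars_def ..
  show ?thesis
    unfolding E F by (intro conjI amal_char_space_eq openin_ideal_chars closedin_algebra_chars)
qed

end
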